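(* Let $g>0$, let $\hat\nu:\mathbb R\to[\nu_0,\nu_1]$ be a stretch-limiting constitutive function as in the context, and let $\epsilon\in(0,1)$. For $\gamma>0$ and $a\in(0,\nu_1)$ let $(\lambda,\mu)$, $\lambda>0$, be the unique solution of $$a\mathbf i+0\,\mathbf k=\int_0^1\frac{\hat\nu(\delta(s))}{\delta(s)}\big(\lambda\mathbf i+(\mu+g\gamma s)\mathbf k\big)\,ds,\qquad \delta(s)=\sqrt{\lambda^2+(\mu+g\gamma s)^2}.$$ Then for all $\gamma>0$ sufficiently small (depending on $\epsilon$ and $\hat\nu$) the following holds. If $$\nu_1-\frac{(g\gamma)^2}{24N_1^2}\big(\nu_1+(2-3\epsilon)\hat\nu_{N^-}(N_1)N_1\big)\le a<\nu_1\frac{2N_1}{g\gamma}\sinh^{-1}\frac{g\gamma}{2N_1},$$ then $\frac{N_1^2-\lambda^2}{(g\gamma)^2}\in(0,\tfrac14)$, i.e. the tensile catenary is a union of an extensible segment and two inextensible segments. Conversely, if $\frac{N_1^2-\lambda^2}{(g\gamma)^2}\in(0,\tfrac14)$, then $$\nu_1-\frac{(g\gamma)^2}{24N_1^2}\big(\nu_1+(2+3\epsilon)\hat\nu_{N^-}(N_1)N_1\big)\le a<\nu_1\frac{2N_1}{g\gamma}\sinh^{-1}\frac{g\gamma}{2N_1}.$$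
   Context: Stretch-limited constitutive function: constants $N_0<0<N_1$, $0<\nu_0<1<\nu_1$ with $\hat\nu(N)=\nu_0$ for $N\le N_0$, $\hat\nu(N)=\nu_1$ for $N\ge N_1$, $\hat\nu\in C^\infty([N_0,N_1];[\nu_0,\nu_1])$, $\hat\nu(0)=1$, $\hat\nu'\ge c>0$ on $[N_0,N_1]$; $\hat\nu_{N^-}(N_1)$ is the left derivative of $\hat\nu$ at $N_1$. The equation describes a tensile uniform catenary (mass $\gamma$ per unit reference length) with supports at $\mathbf 0$ and $a\mathbf i$, tension $N(s)=\delta(s)$, stretch $\hat\nu(\delta(s))$. It is a known fact that for $a\in(0,\nu_1)$ a unique solution with $\lambda>0$ exists, and $\mu=-g\gamma/2$. A segment is inextensible where $\delta\ge N_1$ (stretch $\nu_1$) and extensible where $\delta<N_1$; the condition $\frac{N_1^2-\lambda^2}{(g\gamma)^2}\in(0,1/4)$ is equivalent to $\delta\ge N_1$ on $[0,s_-]\cup[s_+,1]$ and $0<\delta<N_1$ on $(s_-,s_+)$, where $s_\pm=\frac12\pm\frac{1}{g\gamma}\sqrt{N_1^2-\lambda^2}$. *)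

theory Defs
  imports "HOL-Analysis.Analysis"
begin

text \<open>Smoothness on the closed interval [N0,N1] is expressed by
  agreement on [N0,N1] with a C-infinity function f on the real line.\<close>
definition stretch_limited ::
  "real \<Rightarrow> real \<Rightarrow> real \<Rightarrow> real \<Rightarrow> (real \<Rightarrow> real) \<Rightarrow> bool" where
  "stretch_limited N0 N1 nu0 nu1 nu \<longleftrightarrow>
     N0 < 0 \<and> 0 < N1 \<and> 0 < nu0 \<and> nu0 < 1 \<and> 1 < nu1 \<and>
     (\<forall>N. N \<le> N0 \<longrightarrow> nu N = nu0) \<and>
     (\<forall>N. N1 \<le> N \<longrightarrow> nu N = nu1) \<and>
     (\<forall>N. nu0 \<le> nu N \<and> nu N \<le> nu1) \<and>
     nu 0 = 1 \<and>
     (\<exists>f c. (\<forall>k x. ((deriv ^^ k) f) differentiable (at x)) \<and>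
            (\<forall>x\<in>{N0..N1}. f x = nu x) \<and>
            0 < c \<and> (\<forall>x\<in>{N0..N1}. c \<le> deriv f x))"

definition left_deriv :: "(real \<Rightarrow> real) \<Rightarrow> real \<Rightarrow> real" where
  "left_deriv f x = (THE D. (f has_real_derivative D) (at x within {..x}))"

definition cat_delta :: "real \<Rightarrow> real \<Rightarrow> real \<Rightarrow> real \<Rightarrow> real \<Rightarrow> real" where
  "cat_delta g \<gamma> lam mu s = sqrt (lam\<^sup>2 + (mu + g * \<gamma> * s)\<^sup>2)"

definition catenary_solution ::
  "(real \<Rightarrow> real) \<Rightarrow> real \<Rightarrow> real \<Rightarrow> real \<Rightarrow> real \<Rightarrow> real \<Rightarrow> bool" where
  "catenary_solution nu g \<gamma> a lam mu \<longleftrightarrow>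
     a = integral {0..1} (\<lambda>s. nu (cat_delta g \<gamma> lam mu s) / cat_delta g \<gamma> lam mu s * lam) \<and>
     0 = integral {0..1} (\<lambda>s. nu (cat_delta g \<gamma> lam mu s) / cat_delta g \<gamma> lam mu s
                                * (mu + g * \<gamma> * s))"

end

theory Submission
  imports Defs
begin

(*
  Reflecting s to 1 - s in the vertical balance shows that every solution is symmetric,
  mu = -g gamma/2: the vertical component nu(delta) t / delta of the tangent is odd and
  strictly increasing in t = mu + g gamma s. The span a is then A(lambda), the integral of
  nu(delta) lambda / delta over [0,1]. It is nondecreasing in lambda, and for lambda < N1 it
  is strictly smaller than the span A(N1) = nu1 (2 N1/(g gamma)) arsinh(g gamma/(2 N1)) of the
  fully inextensible catenary. The condition on (N1^2 - lambda^2)/(g gamma)^2 says exactly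
  lambda_c < lambda < N1, where lambda_c = sqrt(N1^2 - (g gamma)^2/4) is the horizontal tension
  at which the end tensions equal N1. Expanding the integrand of A(lambda_c) to first order in
  w = (g gamma)^2/(4 N1^2), using nu(N) = nu1 - nu'(N1-)(N1 - N) + o(N1 - N), gives
  A(lambda_c) = nu1 - w/6 (nu1 + 2 nu'(N1-) N1) + o(w), which for small gamma lies strictly
  between the two lower bounds on a. Monotonicity of A converts bounds on a into bounds on
  lambda and back.
*)

lemma left_deriv_eqI:
  assumes "(f has_real_derivative D) (at x within {..x})"
  shows "left_deriv f x = D"
proof -
  have "at x within {..x} \<noteq> bot"
    by (simp add: at_within_Iic_at_left)
  then show ?thesis
    unfolding left_deriv_def using has_field_derivative_unique assms by (intro the_equality) blast+
qed

lemma left_derivative_linear_approx: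
  assumes "(f has_real_derivative c) (at x within {..x})" "0 < \<kappa>"
  obtains \<rho> where "0 < \<rho>"
    "\<And>y. x - \<rho> < y \<Longrightarrow> y \<le> x \<Longrightarrow> \<bar>f y - f x + c * (x - y)\<bar> \<le> \<kappa> * (x - y)"
proof -
  have "((\<lambda>y. (f y - f x) / (y - x)) \<longlongrightarrow> c) (at x within {..x})"
    using assms(1) has_field_derivative_iff by blast
  then have "eventually (\<lambda>y. dist ((f y - f x) / (y - x)) c < \<kappa>) (at x within {..x})"
    using assms(2) tendstoD by blast
  then obtain \<rho> where \<rho>: "0 < \<rho>"
    "\<And>y. y \<in> {..x} \<Longrightarrow> y \<noteq> x \<Longrightarrow> dist y x < \<rho> \<Longrightarrow> \<bar>(f y - f x) / (y - x) - c\<bar> < \<kappa>"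
    unfolding eventually_at dist_real_def by blast
  have "\<bar>f y - f x + c * (x - y)\<bar> \<le> \<kappa> * (x - y)" if "x - \<rho> < y" "y \<le> x" for y
  proof (cases "y = x")
    case False
    then have "y < x" using that by simp
    moreover have "f y - f x + c * (x - y) = - ((f y - f x) / (y - x) - c) * (x - y)"
      using \<open>y < x\<close> by (simp add: field_simps)
    ultimately show ?thesis
      using \<rho>(2)[of y] that by (simp add: abs_mult dist_real_def)
  qed simp
  with \<rho>(1) show ?thesis by (rule that)
qed

lemma integral_less_real_at:
  fixes f g :: "real \<Rightarrow> real"
  assumes "continuous_on {a..b} f" "continuous_on {a..b} g" "a < b"
    and "\<And>s. s \<in> {a..b} \<Longrightarrow> f s \<le> g s" "x \<in> {a..b}" "f x < g x"
  shows "integral {a..b} f < integral {a..b} g"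
proof -
  have cont: "continuous_on {a..b} (\<lambda>s. g s - f s)"
    using assms by (intro continuous_on_diff)
  have "integral {a..b} (\<lambda>s. g s - f s) \<noteq> 0"
    using integral_eq_0_iff[OF cont \<open>a < b\<close>] assms by auto
  moreover have "0 \<le> integral {a..b} (\<lambda>s. g s - f s)"
    using assms by (intro integral_nonneg integrable_continuous_interval cont) auto
  moreover have "integral {a..b} (\<lambda>s. g s - f s) = integral {a..b} g - integral {a..b} f"
    using assms by (intro integral_diff integrable_continuous_interval)
  ultimately show ?thesis by linarith
qed

lemma integral_reflect_interval:
  fixes f :: "real \<Rightarrow> real"
  assumes "f integrable_on {a..b}"
  shows "integral {a..b} (\<lambda>s. f (a + b - s)) = integral {a..b} f"
proof -
  have "(f has_integral integral {a..b} f) (cbox a b)"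
    using assms by (simp add: integrable_integral)
  from has_integral_affinity[OF this, of "-1" "a + b"]
  have "((\<lambda>s. f (a + b - s)) has_integral integral {a..b} f) ((\<lambda>s. a + b - s) ` {a..b})"
    by (simp add: algebra_simps)
  moreover have "(\<lambda>s. a + b - s) ` {a..b} = {a..b}"
    by (auto simp: image_iff intro!: bexI[where x="a + b - _"])
  ultimately show ?thesis by (simp add: integral_unique)
qed

section \<open>The stretch-limited constitutive function\<close>

lemma stretch_limited_smooth_extension:
  assumes "stretch_limited N0 N1 nu0 nu1 nu"
  obtains f where "\<And>x. (f has_real_derivative deriv f x) (at x)"
    "\<And>x. nu x = f (max N0 (min N1 x))" "\<And>x. x \<in> {N0..N1} \<Longrightarrow> 0 < deriv f x"
proof -
  from assms obtain f c where N: "N0 < 0" "0 < N1" "\<forall>N. N \<le> N0 \<longrightarrow> nu N = nu0"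
      "\<forall>N. N1 \<le> N \<longrightarrow> nu N = nu1"
    and smooth: "\<forall>k x. ((deriv ^^ k) f) differentiable (at x)"
    and agree: "\<forall>x\<in>{N0..N1}. f x = nu x" and c: "0 < c" "\<forall>x\<in>{N0..N1}. c \<le> deriv f x"
    unfolding stretch_limited_def by blast
  have "(f has_real_derivative deriv f x) (at x)" for x
    using smooth[rule_format, of 0 x] DERIV_deriv_iff_real_differentiable by simp
  moreover have "nu x = f (max N0 (min N1 x))" for x
    using N agree by (cases "x \<le> N0"; cases "N1 \<le> x") (auto simp: max_def min_def)
  moreover have "0 < deriv f x" if "x \<in> {N0..N1}" for x
    using c that by force
  ultimately show ?thesis by (rule that)
qed

lemma stretch_limited_pos:
  assumes "stretch_limited N0 N1 nu0 nu1 nu"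
  shows "0 < nu x"
  using assms unfolding stretch_limited_def by (meson less_le_trans)

lemma stretch_limited_continuous:
  assumes "stretch_limited N0 N1 nu0 nu1 nu"
  shows "continuous_on UNIV nu"
proof -
  obtain f where f: "\<And>x. (f has_real_derivative deriv f x) (at x)"
    and nu: "\<And>x. nu x = f (max N0 (min N1 x))" and "\<And>x. x \<in> {N0..N1} \<Longrightarrow> 0 < deriv f x"
    using stretch_limited_smooth_extension[OF assms] by blast
  have "continuous_on UNIV f"
    using f by (meson DERIV_isCont continuous_at_imp_continuous_on)
  moreover have "continuous_on UNIV (\<lambda>x::real. max N0 (min N1 x))"
    by (intro continuous_intros)
  ultimately have "continuous_on UNIV (\<lambda>x. f (max N0 (min N1 x)))"
    by (rule continuous_on_compose2) simp
  then show ?thesis unfolding nu[abs_def] .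
qed

lemma stretch_limited_mono:
  assumes "stretch_limited N0 N1 nu0 nu1 nu"
  shows "mono nu"
proof
  fix x y :: real assume "x \<le> y"
  obtain f where f: "\<And>x. (f has_real_derivative deriv f x) (at x)"
    and nu: "\<And>x. nu x = f (max N0 (min N1 x))" and pos: "\<And>x. x \<in> {N0..N1} \<Longrightarrow> 0 < deriv f x"
    using stretch_limited_smooth_extension[OF assms] by blast
  have "N0 < N1" using assms unfolding stretch_limited_def by linarith
  then have le: "max N0 (min N1 x) \<le> max N0 (min N1 y)" and clamp: "max N0 (min N1 y) \<le> N1"
    using \<open>x \<le> y\<close> by auto
  have "f (max N0 (min N1 x)) \<le> f (max N0 (min N1 y))"
  proof (rule DERIV_nonneg_imp_increasing_open[OF le])
    fix z assume "max N0 (min N1 x) < z" "z < max N0 (min N1 y)"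
    then have "0 < deriv f z" using pos clamp by auto
    then show "\<exists>D. (f has_real_derivative D) (at z) \<and> 0 \<le> D" using f by (blast intro: less_imp_le)
  next
    show "continuous_on {max N0 (min N1 x)..max N0 (min N1 y)} f"
      using f by (meson DERIV_isCont continuous_at_imp_continuous_on)
  qed
  then show "nu x \<le> nu y" unfolding nu .
qed

lemma stretch_limited_left_derivative:
  assumes "stretch_limited N0 N1 nu0 nu1 nu"
  shows "(nu has_real_derivative left_deriv nu N1) (at N1 within {..N1})" "0 < left_deriv nu N1"
proof -
  obtain f where f: "\<And>x. (f has_real_derivative deriv f x) (at x)"
    and nu: "\<And>x. nu x = f (max N0 (min N1 x))" and pos: "\<And>x. x \<in> {N0..N1} \<Longrightarrow> 0 < deriv f x"
    using stretch_limited_smooth_extension[OF assms] by blast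
  have N: "N0 < 0" "0 < N1" using assms unfolding stretch_limited_def by auto
  have "(f has_real_derivative deriv f N1) (at N1 within {..N1})"
    using f has_field_derivative_at_within by blast
  then have D: "(nu has_real_derivative deriv f N1) (at N1 within {..N1})"
    by (rule has_field_derivative_transform_within[where d="N1 - N0"])
       (use N in \<open>auto simp: nu dist_real_def max_def min_def\<close>)
  then show "(nu has_real_derivative left_deriv nu N1) (at N1 within {..N1})"
    by (simp add: left_deriv_eqI)
  show "0 < left_deriv nu N1"
    using pos[of N1] N by (simp add: left_deriv_eqI[OF D])
qed

section \<open>Symmetry of the tensile catenary\<close>

lemma unit_tangent_vertical_strict_mono:
  fixes l t1 t2 :: real
  assumes "0 < l" "t1 < t2"
  shows "t1 / sqrt (l^2 + t1^2) < t2 / sqrt (l^2 + t2^2)"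
proof (rule DERIV_pos_imp_increasing[OF assms(2)], intro allI impI exI conjI)
  fix t :: real
  define D where "D = l^2 + t^2"
  have pos: "0 < D" using assms unfolding D_def by (simp add: add_pos_nonneg)
  have "((\<lambda>t. t / sqrt (l^2 + t^2)) has_real_derivative (sqrt D - t * (inverse (sqrt D) * t)) / D) (at t)"
    using pos unfolding D_def by (auto intro!: derivative_eq_intros simp: power2_eq_square)
  moreover have "(sqrt D - t * (inverse (sqrt D) * t)) / D = l^2 / (D * sqrt D)"
  proof -
    have "sqrt D - t * (inverse (sqrt D) * t) = (sqrt D * sqrt D - t^2) / sqrt D"
      using pos by (simp add: field_simps power2_eq_square)
    also have "\<dots> = l^2 / sqrt D"
      using pos by (simp add: D_def)
    finally show ?thesis by simp
  qed
  ultimately show "((\<lambda>t. t / sqrt (l^2 + t^2)) has_real_derivative l^2 / (D * sqrt D)) (at t)"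
    by simp
  show "0 < l^2 / (D * sqrt D)" using pos assms by simp
qed

lemma stretch_vertical_strict_mono:
  fixes nu :: "real \<Rightarrow> real"
  assumes "0 < l" "mono nu" "\<And>x. 0 < nu x" "t1 < t2"
  shows "nu (sqrt (l^2 + t1^2)) / sqrt (l^2 + t1^2) * t1 < nu (sqrt (l^2 + t2^2)) / sqrt (l^2 + t2^2) * t2"
proof -
  define q1 q2 where "q1 = t1 / sqrt (l^2 + t1^2)" and "q2 = t2 / sqrt (l^2 + t2^2)"
  define V1 V2 where "V1 = nu (sqrt (l^2 + t1^2))" and "V2 = nu (sqrt (l^2 + t2^2))"
  have q: "q1 < q2" unfolding q1_def q2_def using unit_tangent_vertical_strict_mono assms by blast
  have V: "0 < V1" "0 < V2" unfolding V1_def V2_def using assms by auto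
  consider "0 \<le> t1" | "t2 \<le> 0" | "t1 < 0" "0 < t2" by linarith
  then have "V1 * q1 < V2 * q2"
  proof cases
    case 1
    then have "V1 \<le> V2"
      unfolding V1_def V2_def using assms by (intro monoD[OF assms(2)]) (simp add: power_mono)
    moreover have "0 \<le> q1" unfolding q1_def using 1 by simp
    ultimately have "V1 * q1 \<le> V2 * q1" by (simp add: mult_right_mono)
    also have "\<dots> < V2 * q2" using q V by simp
    finally show ?thesis .
  next
    case 2
    then have "(-t2)^2 \<le> (-t1)^2" using assms by (intro power_mono) auto
    then have "t2^2 \<le> t1^2" by simp
    then have "V2 \<le> V1" unfolding V1_def V2_def by (intro monoD[OF assms(2)]) simp
    moreover have "q2 \<le> 0" unfolding q2_def using 2 by (simp add: divide_nonpos_nonneg)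
    ultimately have "V1 * q1 \<le> V2 * q1" using q by (simp add: mult_right_mono_neg)
    also have "\<dots> < V2 * q2" using q V by simp
    finally show ?thesis .
  next
    case 3
    then have "q1 < 0" "0 < q2"
      unfolding q1_def q2_def using assms by (simp_all add: divide_neg_pos add_pos_nonneg)
    then have "V1 * q1 < 0" "0 < V2 * q2" using V by (simp_all add: mult_pos_neg)
    then show ?thesis by linarith
  qed
  then show ?thesis unfolding V1_def V2_def q1_def q2_def by simp
qed

lemma continuous_on_catenary_integrand:
  fixes nu :: "real \<Rightarrow> real"
  assumes "0 < l" "continuous_on UNIV nu" "continuous_on S w"
  shows "continuous_on S (\<lambda>s. nu (cat_delta g \<gamma> l mu s) / cat_delta g \<gamma> l mu s * w s)"
proof -
  have "0 < cat_delta g \<gamma> l mu s" for s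
    unfolding cat_delta_def using assms(1) by (simp add: add_pos_nonneg)
  then show ?thesis
    unfolding cat_delta_def using assms
    by (intro continuous_intros continuous_on_compose2[OF assms(2)]) (auto simp: cat_delta_def)
qed

lemma integrable_catenary_integrand:
  fixes nu :: "real \<Rightarrow> real"
  assumes "0 < l" "continuous_on UNIV nu"
  shows "(\<lambda>s. nu (cat_delta g \<gamma> l mu s) / cat_delta g \<gamma> l mu s * l) integrable_on {0..1}"
  using assms by (intro integrable_continuous_interval continuous_on_catenary_integrand continuous_on_const)

lemma catenary_vertical_balance_imp_symmetric:
  fixes nu :: "real \<Rightarrow> real"
  assumes "0 < l" "0 < g" "0 < \<gamma>" "mono nu" "\<And>x. 0 < nu x" "continuous_on UNIV nu"
    and balance: "integral {0..1} (\<lambda>s. nu (cat_delta g \<gamma> l mu s) / cat_delta g \<gamma> l mu s * (mu + g * \<gamma> * s)) = 0"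
  shows "mu = - (g * \<gamma>) / 2"
proof -
  define P where "P t = nu (sqrt (l^2 + t^2)) / sqrt (l^2 + t^2) * t" for t
  define \<psi> where "\<psi> s = P (mu + g * \<gamma> * s)" for s
  have P_less: "P t1 < P t2" if "t1 < t2" for t1 t2
    unfolding P_def using stretch_vertical_strict_mono assms that by blast
  have "continuous_on {0..1} (\<lambda>s. mu + g * \<gamma> * s)"
    by (intro continuous_intros)
  from continuous_on_catenary_integrand[OF assms(1,6) this]
  have cont: "continuous_on {0..1} \<psi>"
    unfolding \<psi>_def P_def cat_delta_def .
  have cont_refl: "continuous_on {0..1} (\<lambda>s. \<psi> (1 - s))"
    by (intro continuous_on_compose2[OF cont] continuous_intros) auto
  have cont_sym: "continuous_on {0..1} (\<lambda>s. \<psi> s + \<psi> (1 - s))"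
    using cont cont_refl by (rule continuous_on_add)
  have "integral {0..1} (\<lambda>s. \<psi> s + \<psi> (1 - s)) = integral {0..1} \<psi> + integral {0..1} \<psi>"
    using integral_add[OF integrable_continuous_interval[OF cont] integrable_continuous_interval[OF cont_refl]]
      integral_reflect_interval[OF integrable_continuous_interval[OF cont]] by simp
  then have sym_zero: "integral {0..1} (\<lambda>s. \<psi> s + \<psi> (1 - s)) = 0"
    using balance unfolding \<psi>_def P_def cat_delta_def by simp
  have P_odd: "P (- t) = - P t" for t
    unfolding P_def by simp
  \<comment> \<open>P is odd and strictly increasing, so \<psi> s + \<psi> (1 - s) has the sign of 2 mu + g \<gamma> on all of [0,1]\<close>
  have sym: "\<psi> s + \<psi> (1 - s) = P (mu + g * \<gamma> * s) - P (- mu - g * \<gamma> + g * \<gamma> * s)" for s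
    unfolding \<psi>_def using P_odd[of "mu + g * \<gamma> * (1 - s)"] by (simp add: algebra_simps)
  show ?thesis
  proof (rule ccontr)
    assume "mu \<noteq> - (g * \<gamma>) / 2"
    then consider "2 * mu + g * \<gamma> > 0" | "2 * mu + g * \<gamma> < 0" by linarith
    then show False
    proof cases
      case 1
      then have "integral {0..1} (\<lambda>_::real. 0::real) < integral {0..1} (\<lambda>s. \<psi> s + \<psi> (1 - s))"
        by (intro integral_less_real cont_sym) (auto simp: sym intro!: P_less)
      then show False using sym_zero by simp
    next
      case 2
      then have "integral {0..1} (\<lambda>s. \<psi> s + \<psi> (1 - s)) < integral {0..1} (\<lambda>_::real. 0::real)"
        by (intro integral_less_real cont_sym) (auto simp: sym intro!: P_less)
      then show False using sym_zero by simp
    qed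
  qed
qed

section \<open>The span as a function of the horizontal tension\<close>

definition catenary_span :: "(real \<Rightarrow> real) \<Rightarrow> real \<Rightarrow> real \<Rightarrow> real \<Rightarrow> real" where
  "catenary_span nu g \<gamma> l =
     integral {0..1} (\<lambda>s. nu (cat_delta g \<gamma> l (- (g * \<gamma>) / 2) s) / cat_delta g \<gamma> l (- (g * \<gamma>) / 2) s * l)"

lemma catenary_solution_imp_span:
  assumes "stretch_limited N0 N1 nu0 nu1 nu" "0 < g" "0 < \<gamma>" "0 < lam"
    and "catenary_solution nu g \<gamma> a lam mu"
  shows "a = catenary_span nu g \<gamma> lam"
proof -
  have "mu = - (g * \<gamma>) / 2"
    using assms stretch_limited_pos stretch_limited_mono stretch_limited_continuous
    by (intro catenary_vertical_balance_imp_symmetric[of lam g \<gamma> nu]) (auto simp: catenary_solution_def)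
  then show ?thesis
    using assms(5) unfolding catenary_solution_def catenary_span_def by simp
qed

lemma unit_tangent_horizontal_strict_mono:
  fixes l1 l2 t :: real
  assumes "0 < l1" "l1 < l2" "t \<noteq> 0"
  shows "l1 / sqrt (l1^2 + t^2) < l2 / sqrt (l2^2 + t^2)"
proof -
  have square: "(l / sqrt (l^2 + t^2))^2 = 1 - t^2 / (l^2 + t^2)" if "0 < l" for l
    using that by (simp add: power_divide add_pos_nonneg field_simps)
  have "l1^2 < l2^2"
    using assms by (intro power_strict_mono) auto
  moreover have "0 < l1^2 + t^2" "0 < l2^2 + t^2"
    using assms by (simp_all add: add_pos_nonneg)
  ultimately have "t^2 / (l2^2 + t^2) < t^2 / (l1^2 + t^2)"
    using assms by (intro divide_strict_left_mono) auto
  then have "(l1 / sqrt (l1^2 + t^2))^2 < (l2 / sqrt (l2^2 + t^2))^2"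
    using assms by (simp add: square)
  moreover have "0 \<le> l2 / sqrt (l2^2 + t^2)"
    using assms by simp
  ultimately show ?thesis
    by (rule power2_less_imp_less)
qed

lemma unit_tangent_horizontal_mono:
  fixes l1 l2 t :: real
  assumes "0 < l1" "l1 \<le> l2"
  shows "l1 / sqrt (l1^2 + t^2) \<le> l2 / sqrt (l2^2 + t^2)"
  using assms unit_tangent_horizontal_strict_mono[of l1 l2 t]
  by (cases "l1 = l2 \<or> t = 0") (auto simp: less_le)

lemma stretch_horizontal_mono:
  fixes nu :: "real \<Rightarrow> real"
  assumes "0 < l1" "l1 \<le> l2" "mono nu" "\<And>x. 0 \<le> nu x"
  shows "nu (sqrt (l1^2 + t^2)) / sqrt (l1^2 + t^2) * l1 \<le> nu (sqrt (l2^2 + t^2)) / sqrt (l2^2 + t^2) * l2"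
proof -
  have "nu (sqrt (l1^2 + t^2)) \<le> nu (sqrt (l2^2 + t^2))"
    using assms by (intro monoD[OF assms(3)]) (simp add: power_mono)
  moreover have "l1 / sqrt (l1^2 + t^2) \<le> l2 / sqrt (l2^2 + t^2)"
    using assms(1,2) by (rule unit_tangent_horizontal_mono)
  ultimately have "nu (sqrt (l1^2 + t^2)) * (l1 / sqrt (l1^2 + t^2)) \<le> nu (sqrt (l2^2 + t^2)) * (l2 / sqrt (l2^2 + t^2))"
    using assms by (intro mult_mono) auto
  then show ?thesis by simp
qed

lemma catenary_span_mono:
  fixes nu :: "real \<Rightarrow> real"
  assumes "0 < l1" "l1 \<le> l2" "mono nu" "\<And>x. 0 \<le> nu x" "continuous_on UNIV nu"
  shows "catenary_span nu g \<gamma> l1 \<le> catenary_span nu g \<gamma> l2"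
  unfolding catenary_span_def
proof (rule integral_le)
  show "nu (cat_delta g \<gamma> l1 mu s) / cat_delta g \<gamma> l1 mu s * l1 \<le> nu (cat_delta g \<gamma> l2 mu s) / cat_delta g \<gamma> l2 mu s * l2"
    for s mu unfolding cat_delta_def by (rule stretch_horizontal_mono[OF assms(1-4)])
  have "0 < l2" using assms(1,2) by linarith
  then show "(\<lambda>s. nu (cat_delta g \<gamma> l2 (- (g * \<gamma>) / 2) s) / cat_delta g \<gamma> l2 (- (g * \<gamma>) / 2) s * l2) integrable_on {0..1}"
    using assms(5) by (rule integrable_catenary_integrand)
qed (rule integrable_catenary_integrand[OF assms(1,5)])

lemma catenary_span_less_inextensible:
  fixes nu :: "real \<Rightarrow> real"
  assumes "0 < l" "l < N1" "0 < g" "0 < \<gamma>" "continuous_on UNIV nu"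
    and "\<And>x. nu x \<le> nu1" "\<And>x. N1 \<le> x \<Longrightarrow> nu x = nu1" "0 < nu1"
  shows "catenary_span nu g \<gamma> l < catenary_span nu g \<gamma> N1"
proof -
  define t where "t s = - (g * \<gamma>) / 2 + g * \<gamma> * s" for s
  define F where "F s = nu (cat_delta g \<gamma> l (- (g * \<gamma>) / 2) s) / cat_delta g \<gamma> l (- (g * \<gamma>) / 2) s * l" for s
  define G where "G s = nu (cat_delta g \<gamma> N1 (- (g * \<gamma>) / 2) s) / cat_delta g \<gamma> N1 (- (g * \<gamma>) / 2) s * N1" for s
  define H where "H s = nu1 * (l / sqrt (l^2 + (t s)^2))" for s
  have G: "G s = nu1 * (N1 / sqrt (N1^2 + (t s)^2))" for s
    unfolding G_def cat_delta_def t_def using assms(1,2,7) real_sqrt_ge_abs1[of N1] by simp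
  have "F s \<le> H s" for s
    unfolding F_def H_def cat_delta_def t_def using assms(1,6)
    by (simp add: divide_right_mono mult_right_mono)
  moreover have "H s \<le> G s" for s
    unfolding G H_def using assms by (intro mult_left_mono unit_tangent_horizontal_mono) auto
  moreover have "H 0 < G 0"
    unfolding G H_def using assms by (intro mult_strict_left_mono unit_tangent_horizontal_strict_mono) (auto simp: t_def)
  moreover have "continuous_on {0..1} F"
    unfolding F_def using assms(1,5) by (intro continuous_on_catenary_integrand continuous_on_const)
  moreover have "continuous_on {0..1} G"
    unfolding G_def using assms(1,2,5) by (intro continuous_on_catenary_integrand continuous_on_const) auto
  ultimately have "integral {0..1} F < integral {0..1} G"
    by (intro integral_less_real_at[of 0 1 F G 0]) (auto intro: order_trans le_less_trans)
  then show ?thesis unfolding catenary_span_def F_def G_def .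
qed

lemma has_integral_inextensible_span:
  fixes L h nu1 :: real
  assumes "0 < L" "0 < h"
  shows "((\<lambda>s. nu1 / sqrt (L^2 + (- h / 2 + h * s)^2) * L) has_integral nu1 * (2 * L / h) * arsinh (h / (2 * L))) {0..1}"
proof -
  define F where "F s = nu1 * L / h * arsinh ((h * s - h / 2) / L)" for s
  have "((\<lambda>s. nu1 / sqrt (L^2 + (- h / 2 + h * s)^2) * L) has_integral (F 1 - F 0)) {0..1}"
  proof (rule fundamental_theorem_of_calculus)
    fix x :: real
    have "((h * x - h / 2) / L)^2 + 1 = (L^2 + (- h / 2 + h * x)^2) / L^2"
      using assms by (simp add: field_simps power2_eq_square)
    then have e: "sqrt (((h * x - h / 2) / L)^2 + 1) = sqrt (L^2 + (- h / 2 + h * x)^2) / L"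
      using assms by (simp add: real_sqrt_divide)
    have pos: "0 < sqrt (L^2 + (- h / 2 + h * x)^2)" using assms by (simp add: add_pos_nonneg)
    have "((\<lambda>s. (h * s - h / 2) / L) has_real_derivative h / L) (at x)"
      using assms by (auto intro!: derivative_eq_intros)
    from DERIV_chain2[OF arsinh_real_has_field_derivative this]
    have "(F has_real_derivative nu1 * L / h * (1 / sqrt (((h * x - h / 2) / L)^2 + 1) * (h / L))) (at x)"
      unfolding F_def by (rule DERIV_cmult)
    moreover have "nu1 * L / h * (1 / sqrt (((h * x - h / 2) / L)^2 + 1) * (h / L))
        = nu1 / sqrt (L^2 + (- h / 2 + h * x)^2) * L"
      unfolding e using assms pos by (simp add: field_simps)
    ultimately show "(F has_vector_derivative nu1 / sqrt (L^2 + (- h / 2 + h * x)^2) * L) (at x within {0..1})"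
      using has_field_derivative_at_within has_real_derivative_iff_has_vector_derivative by metis
  qed simp
  moreover have "F 1 - F 0 = nu1 * (2 * L / h) * arsinh (h / (2 * L))"
    unfolding F_def using assms by (simp add: field_simps)
  ultimately show ?thesis by simp
qed

lemma catenary_span_inextensible:
  fixes nu :: "real \<Rightarrow> real"
  assumes "0 < N1" "0 < g" "0 < \<gamma>" "\<And>x. N1 \<le> x \<Longrightarrow> nu x = nu1"
  shows "catenary_span nu g \<gamma> N1 = nu1 * (2 * N1 / (g * \<gamma>)) * arsinh (g * \<gamma> / (2 * N1))"
proof -
  have "nu (cat_delta g \<gamma> N1 (- (g * \<gamma>) / 2) s) = nu1" for s
    unfolding cat_delta_def using assms(1,4) real_sqrt_ge_abs1[of N1] by simp
  then have "catenary_span nu g \<gamma> N1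
      = integral {0..1} (\<lambda>s. nu1 / sqrt (N1^2 + (- (g * \<gamma>) / 2 + (g * \<gamma>) * s)^2) * N1)"
    unfolding catenary_span_def by (simp add: cat_delta_def)
  also have "\<dots> = nu1 * (2 * N1 / (g * \<gamma>)) * arsinh (g * \<gamma> / (2 * N1))"
    using assms by (intro integral_unique has_integral_inextensible_span) auto
  finally show ?thesis .
qed

section \<open>Expansion of the span at the critical tension\<close>

lemma sqrt_one_minus_bounds:
  fixes w :: real
  assumes "0 \<le> w" "w \<le> 1/2"
  shows "1 - w/2 - w^2 \<le> sqrt (1 - w)" "sqrt (1 - w) \<le> 1 - w/2"
proof -
  show "sqrt (1 - w) \<le> 1 - w/2"
    by (rule real_le_lsqrt) (use assms in \<open>auto simp: power2_eq_square algebra_simps\<close>)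
  have "w^3 \<le> w^2 * (1/2)"
    using assms unfolding power3_eq_cube power2_eq_square by (intro mult_left_mono) auto
  moreover have "w^2 \<le> (1/2)^2"
    using assms by (intro power_mono) auto
  then have "w^2 * w^2 \<le> w^2 * (1/4)"
    by (intro mult_left_mono) (simp_all add: power_divide)
  moreover have "(1 - w/2 - w^2)^2 = 1 - w - (7/4) * w^2 + w^3 + w^2 * w^2"
    by (simp add: power2_eq_square power3_eq_cube algebra_simps)
  moreover have "0 \<le> w^2" by simp
  ultimately have "(1 - w/2 - w^2)^2 \<le> 1 - w"
    by linarith
  then show "1 - w/2 - w^2 \<le> sqrt (1 - w)"
    by (rule real_le_rsqrt)
qed

lemma inverse_sqrt_one_minus_bounds:
  fixes v :: real
  assumes "0 \<le> v" "v \<le> 1/2"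
  shows "1 + v/2 \<le> 1 / sqrt (1 - v)" "1 / sqrt (1 - v) \<le> 1 + v/2 + v^2"
proof -
  have pos: "0 < 1 - v" using assms by simp
  have inv: "1 / sqrt (1 - v) = sqrt (1 / (1 - v))" by (simp add: real_sqrt_divide)
  have "(1 + v/2)^2 * (1 - v) = 1 - (3/4) * v^2 - (1/4) * v^3"
    by (simp add: eval_nat_numeral field_simps)
  moreover have "0 \<le> v^2" "0 \<le> v^3" using assms by simp_all
  ultimately have "(1 + v/2)^2 * (1 - v) \<le> 1" by linarith
  then have "(1 + v/2)^2 \<le> 1 / (1 - v)" using pos by (simp add: le_divide_eq)
  then show "1 + v/2 \<le> 1 / sqrt (1 - v)" unfolding inv by (rule real_le_rsqrt)
  have "(1 + v/2 + v^2)^2 * (1 - v) = 1 + (5/4) * v^2 - (5/4) * v^3 - v^2 * v^3"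
    by (simp add: eval_nat_numeral field_simps)
  moreover have "v^3 \<le> v^2 * (1/2)"
    using assms unfolding power3_eq_cube power2_eq_square by (intro mult_left_mono) auto
  moreover have "v^3 \<le> (1/2)^3"
    using assms by (intro power_mono) auto
  then have "v^2 * v^3 \<le> v^2 * (1/8)"
    by (intro mult_left_mono) (simp_all add: power_divide)
  moreover have "0 \<le> v^2" by simp
  ultimately have "1 \<le> (1 + v/2 + v^2)^2 * (1 - v)"
    by linarith
  then have "1 / (1 - v) \<le> (1 + v/2 + v^2)^2" using pos by (simp add: divide_le_eq)
  then show "1 / sqrt (1 - v) \<le> 1 + v/2 + v^2"
    unfolding inv using assms by (intro real_le_lsqrt) auto
qed

lemma product_approx:
  fixes X Y Z X0 Y0 Z0 e1 e2 e3 K :: real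
  assumes "\<bar>X - X0\<bar> \<le> e1" "\<bar>Y - Y0\<bar> \<le> e2" "\<bar>Z - Z0\<bar> \<le> e3"
    and "\<bar>Y\<bar> \<le> 2" "\<bar>Z\<bar> \<le> K" "\<bar>X0\<bar> \<le> 1" "\<bar>Y0\<bar> \<le> 2"
  shows "\<bar>X * Y * Z - X0 * Y0 * Z0\<bar> \<le> e1 * 2 * K + e2 * K + 2 * e3"
proof -
  have "X * Y * Z - X0 * Y0 * Z0 = (X - X0) * Y * Z + X0 * (Y - Y0) * Z + X0 * Y0 * (Z - Z0)"
    by (simp add: algebra_simps)
  moreover have "\<bar>(X - X0) * Y * Z\<bar> \<le> e1 * 2 * K"
    unfolding abs_mult using assms by (intro mult_mono) auto
  moreover have "\<bar>X0 * (Y - Y0) * Z\<bar> \<le> 1 * e2 * K"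
    unfolding abs_mult using assms by (intro mult_mono) auto
  moreover have "\<bar>X0 * Y0 * (Z - Z0)\<bar> \<le> 1 * 2 * e3"
    unfolding abs_mult using assms by (intro mult_mono) auto
  ultimately show ?thesis by (simp add: abs_le_iff)
qed

lemma first_order_product_error:
  fixes v w nu1 B :: real
  assumes "0 \<le> v" "v \<le> w" "w \<le> 1" "0 \<le> nu1" "0 \<le> B"
  shows "\<bar>(1 - w/2) * (1 + v/2) * (nu1 - B * v / 2) - (nu1 - nu1 * w / 2 + (nu1 - B) * v / 2)\<bar>
    \<le> (nu1 + B) * w^2"
proof -
  have "w * v \<le> w^2" "v^2 \<le> w^2"
    using assms by (auto simp: power2_eq_square intro: mult_mono)
  moreover have "w * v^2 \<le> v^2"
    using assms mult_right_mono[of w 1 "v^2"] by simp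
  ultimately have "w * v \<le> w^2" "v^2 \<le> w^2" "w * v^2 \<le> w^2"
    by auto
  then have "nu1 * (w * v) \<le> nu1 * w^2" "B * (w * v) \<le> B * w^2" "B * v^2 \<le> B * w^2"
    "B * (w * v^2) \<le> B * w^2"
    using assms by (simp_all add: mult_left_mono)
  moreover have "0 \<le> nu1 * (w * v)" "0 \<le> B * (w * v)" "0 \<le> B * v^2" "0 \<le> B * (w * v^2)"
    using assms by auto
  moreover have "(1 - w/2) * (1 + v/2) * (nu1 - B * v / 2) - (nu1 - nu1 * w / 2 + (nu1 - B) * v / 2)
      = - nu1 * (w * v) / 4 + B * (w * v) / 4 - B * v^2 / 4 + B * (w * v^2) / 8"
    by (simp add: field_simps power2_eq_square)
  ultimately show ?thesis
    by (simp add: abs_le_iff algebra_simps)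
qed

lemma stretch_near_limit_approx:
  fixes nu :: "real \<Rightarrow> real"
  assumes v: "0 \<le> v" "v \<le> 1/2" and "0 < N1" "0 < c" "0 \<le> \<kappa>" "N1 * v < \<rho>"
    and der: "\<And>y. N1 - \<rho> < y \<Longrightarrow> y \<le> N1 \<Longrightarrow> \<bar>nu y - nu1 + c * (N1 - y)\<bar> \<le> \<kappa> * (N1 - y)"
  shows "\<bar>nu (N1 * sqrt (1 - v)) - (nu1 - c * N1 * v / 2)\<bar> \<le> c * N1 * v^2 + \<kappa> * N1 * v"
proof -
  define \<eta> where "\<eta> = N1 * (1 - sqrt (1 - v))"
  have "N1 * (v/2) \<le> \<eta>" "\<eta> \<le> N1 * (v/2 + v^2)"
    unfolding \<eta>_def using sqrt_one_minus_bounds[OF v] \<open>0 < N1\<close> by (auto intro: mult_left_mono)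
  moreover have "v * v \<le> v * (1/2)"
    using v by (intro mult_left_mono) auto
  then have "N1 * (v/2 + v^2) \<le> N1 * v"
    using \<open>0 < N1\<close> by (intro mult_left_mono) (auto simp: power2_eq_square)
  ultimately have \<eta>: "\<bar>\<eta> - N1 * (v/2)\<bar> \<le> N1 * v^2" "0 \<le> \<eta>" "\<eta> \<le> N1 * v"
    using v \<open>0 < N1\<close> by (auto simp: algebra_simps abs_le_iff)
  have "\<bar>nu (N1 - \<eta>) - nu1 + c * \<eta>\<bar> \<le> \<kappa> * \<eta>"
    using der[of "N1 - \<eta>"] \<eta> \<open>N1 * v < \<rho>\<close> by simp
  moreover have "\<kappa> * \<eta> \<le> \<kappa> * N1 * v"
    using \<eta> \<open>0 \<le> \<kappa>\<close> by (simp add: mult_left_mono mult.assoc)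
  moreover have "\<bar>c * \<eta> - c * N1 * v / 2\<bar> = c * \<bar>\<eta> - N1 * (v/2)\<bar>"
  proof -
    have "c * \<eta> - c * N1 * v / 2 = c * (\<eta> - N1 * (v/2))" by (simp add: algebra_simps)
    then show ?thesis using \<open>0 < c\<close> by (simp add: abs_mult)
  qed
  moreover have "c * \<bar>\<eta> - N1 * (v/2)\<bar> \<le> c * N1 * v^2"
    using mult_left_mono[OF \<eta>(1), of c] \<open>0 < c\<close> by (simp add: mult.assoc)
  moreover have "N1 - \<eta> = N1 * sqrt (1 - v)"
    unfolding \<eta>_def by (simp add: algebra_simps)
  ultimately show ?thesis by (simp add: abs_le_iff) linarith
qed

lemma catenary_integrand_approx:
  fixes nu :: "real \<Rightarrow> real"
  assumes v: "0 \<le> v" "v \<le> w" "w \<le> 1/2" and "0 < N1" "0 < c" "0 \<le> \<kappa>" "N1 * w < \<rho>"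
    and der: "\<And>y. N1 - \<rho> < y \<Longrightarrow> y \<le> N1 \<Longrightarrow> \<bar>nu y - nu1 + c * (N1 - y)\<bar> \<le> \<kappa> * (N1 - y)"
    and bounds: "\<And>y. 0 \<le> nu y" "\<And>y. nu y \<le> nu1"
  shows "\<bar>sqrt (1 - w) * (1 / sqrt (1 - v)) * nu (N1 * sqrt (1 - v))
          - (nu1 - nu1 * w / 2 + (nu1 - c * N1) * v / 2)\<bar>
         \<le> (4 * nu1 + 3 * (c * N1)) * w^2 + 2 * \<kappa> * N1 * w"
proof -
  define B where "B = c * N1"
  have "0 \<le> nu1"
    using bounds(1)[of 0] bounds(2)[of 0] by linarith
  have nonneg: "0 \<le> w" "v \<le> 1/2" "0 < B" "v^2 \<le> w^2"
    unfolding B_def using assms by (auto simp: power2_eq_square intro: mult_mono)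
  have "\<bar>sqrt (1 - w) - (1 - w/2)\<bar> \<le> w^2"
    using sqrt_one_minus_bounds[OF nonneg(1) v(3)] by (simp add: abs_le_iff)
  moreover have "\<bar>1 / sqrt (1 - v) - (1 + v/2)\<bar> \<le> v^2"
    using inverse_sqrt_one_minus_bounds[OF v(1) nonneg(2)] by (simp add: abs_le_iff)
  moreover have "1 / sqrt (1 - v) \<le> 2"
    using inverse_sqrt_one_minus_bounds(2)[OF v(1) nonneg(2)] mult_left_mono[OF nonneg(2) v(1)] nonneg(2)
    by (simp add: power2_eq_square)
  then have "\<bar>1 / sqrt (1 - v)\<bar> \<le> 2"
    using nonneg(2) by (subst abs_of_nonneg) auto
  moreover have "\<bar>nu (N1 * sqrt (1 - v)) - (nu1 - B * v / 2)\<bar> \<le> B * v^2 + \<kappa> * N1 * v"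
  proof -
    have "N1 * v < \<rho>"
      using mult_left_mono[OF v(2), of N1] assms(4,7) by linarith
    then show ?thesis
      unfolding B_def using stretch_near_limit_approx[OF v(1) nonneg(2) assms(4-6) _ der] by simp
  qed
  moreover have "\<bar>nu (N1 * sqrt (1 - v))\<bar> \<le> nu1" using bounds by simp
  ultimately have "\<bar>sqrt (1 - w) * (1 / sqrt (1 - v)) * nu (N1 * sqrt (1 - v)) - (1 - w/2) * (1 + v/2) * (nu1 - B * v / 2)\<bar>
      \<le> w^2 * 2 * nu1 + v^2 * nu1 + 2 * (B * v^2 + \<kappa> * N1 * v)"
    using v by (intro product_approx) auto
  moreover have "\<bar>(1 - w/2) * (1 + v/2) * (nu1 - B * v / 2) - (nu1 - nu1 * w / 2 + (nu1 - B) * v / 2)\<bar>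
      \<le> (nu1 + B) * w^2"
    using v nonneg \<open>0 \<le> nu1\<close> by (intro first_order_product_error) auto
  moreover have "v^2 * nu1 \<le> w^2 * nu1" "B * v^2 \<le> B * w^2" "\<kappa> * N1 * v \<le> \<kappa> * N1 * w"
    using nonneg \<open>0 \<le> nu1\<close> v assms(4,6) by (auto intro: mult_left_mono mult_right_mono)
  ultimately show ?thesis
    unfolding B_def[symmetric] by (simp add: abs_le_iff algebra_simps)
qed

lemma has_integral_parabola:
  fixes a b :: real
  shows "((\<lambda>s. a + b * (s * (1 - s))) has_integral a + b / 6) {0..1}"
proof -
  have "((\<lambda>s. a + b * (s * (1 - s))) has_integral
        (\<lambda>s. a * s + b * (s^2/2 - s^3/3)) 1 - (\<lambda>s. a * s + b * (s^2/2 - s^3/3)) 0) {0..1}"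
  proof (rule fundamental_theorem_of_calculus)
    fix x :: real
    show "((\<lambda>s. a * s + b * (s^2/2 - s^3/3)) has_vector_derivative a + b * (x * (1 - x)))
            (at x within {0..1})"
      unfolding has_real_derivative_iff_has_vector_derivative[symmetric]
      by (rule derivative_eq_intros refl | simp)+ (simp add: field_simps power2_eq_square)
  qed simp
  then show ?thesis by simp
qed

lemma integral_approx_parabola:
  fixes f :: "real \<Rightarrow> real"
  assumes "f integrable_on {0..1}" "\<And>s. s \<in> {0..1} \<Longrightarrow> \<bar>f s - (a + b * (s * (1 - s)))\<bar> \<le> E"
  shows "\<bar>integral {0..1} f - (a + b / 6)\<bar> \<le> E"
proof -
  have up: "((\<lambda>s. (a + E) + b * (s * (1 - s))) has_integral a + E + b / 6) {0..1}"
    and lo: "((\<lambda>s. (a - E) + b * (s * (1 - s))) has_integral a - E + b / 6) {0..1}"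
    by (rule has_integral_parabola)+
  have "integral {0..1} f \<le> a + E + b / 6"
    using has_integral_le[OF integrable_integral[OF assms(1)] up] assms(2) by (force simp: abs_le_iff)
  moreover have "a - E + b / 6 \<le> integral {0..1} f"
    using has_integral_le[OF lo integrable_integral[OF assms(1)]] assms(2) by (force simp: abs_le_iff)
  ultimately show ?thesis by (simp add: abs_le_iff)
qed

lemma critical_tension_eqs:
  assumes "0 < N1" "w = (g * \<gamma>)^2 / (4 * N1^2)" "w \<le> 1"
  shows "sqrt (N1^2 - (g * \<gamma>)^2 / 4) = N1 * sqrt (1 - w)"
    and "cat_delta g \<gamma> (sqrt (N1^2 - (g * \<gamma>)^2 / 4)) (- (g * \<gamma>) / 2) s
      = N1 * sqrt (1 - 4 * w * (s * (1 - s)))"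
proof -
  have hw: "(g * \<gamma>)^2 = 4 * N1^2 * w"
    using assms(1,2) by simp
  have critical: "N1^2 - (g * \<gamma>)^2 / 4 = N1^2 * (1 - w)"
    unfolding hw by (simp add: algebra_simps)
  then show "sqrt (N1^2 - (g * \<gamma>)^2 / 4) = N1 * sqrt (1 - w)"
    using assms(1) by (simp add: real_sqrt_mult)
  have "0 \<le> N1^2 - (g * \<gamma>)^2 / 4"
    unfolding critical using assms(3) by simp
  then have square: "(sqrt (N1^2 - (g * \<gamma>)^2 / 4))^2 = N1^2 * (1 - w)"
    unfolding critical by simp
  have "(sqrt (N1^2 - (g * \<gamma>)^2 / 4))^2 + (- (g * \<gamma>) / 2 + g * \<gamma> * s)^2
      = N1^2 * (1 - w) + (g * \<gamma>)^2 * (s - 1/2)^2"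
    unfolding square by (simp add: power2_eq_square algebra_simps)
  also have "\<dots> = N1^2 * (1 - 4 * w * (s * (1 - s)))"
    unfolding hw by (simp add: power2_eq_square algebra_simps)
  finally show "cat_delta g \<gamma> (sqrt (N1^2 - (g * \<gamma>)^2 / 4)) (- (g * \<gamma>) / 2) s
      = N1 * sqrt (1 - 4 * w * (s * (1 - s)))"
    unfolding cat_delta_def using assms(1) by (simp add: real_sqrt_mult)
qed

lemma catenary_span_critical_approx:
  fixes nu :: "real \<Rightarrow> real"
  assumes "0 < N1" "0 < c" "0 \<le> \<kappa>"
    and der: "\<And>y. N1 - \<rho> < y \<Longrightarrow> y \<le> N1 \<Longrightarrow> \<bar>nu y - nu1 + c * (N1 - y)\<bar> \<le> \<kappa> * (N1 - y)"
    and bounds: "\<And>y. 0 \<le> nu y" "\<And>y. nu y \<le> nu1" and cont: "continuous_on UNIV nu"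
    and w: "w = (g * \<gamma>)^2 / (4 * N1^2)" "w \<le> 1/2" "N1 * w < \<rho>"
  shows "\<bar>catenary_span nu g \<gamma> (sqrt (N1^2 - (g * \<gamma>)^2 / 4)) - (nu1 - w / 6 * (nu1 + 2 * (c * N1)))\<bar>
         \<le> (4 * nu1 + 3 * (c * N1)) * w^2 + 2 * \<kappa> * N1 * w"
proof -
  define lam where "lam = sqrt (N1^2 - (g * \<gamma>)^2 / 4)"
  define v where "v s = 4 * w * (s * (1 - s))" for s
  have lam: "lam = N1 * sqrt (1 - w)" and delta: "\<And>s. cat_delta g \<gamma> lam (- (g * \<gamma>) / 2) s = N1 * sqrt (1 - v s)"
    unfolding lam_def v_def using critical_tension_eqs[OF assms(1) w(1)] w(2) by auto
  have lam_pos: "0 < lam"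
    unfolding lam using assms(1) w(2) by simp
  have v: "0 \<le> v s" "v s \<le> w" if "s \<in> {0..1}" for s
  proof -
    have "0 \<le> s * (1 - s)"
      using that by simp
    moreover have "s * (1 - s) \<le> 1/4"
      using zero_le_power2[of "s - 1/2"] by (simp add: power2_eq_square algebra_simps)
    moreover have "0 \<le> w"
      unfolding w(1) by simp
    ultimately show "0 \<le> v s" "v s \<le> w"
      unfolding v_def using mult_left_mono[of "s * (1 - s)" "1/4" "4 * w"] by simp_all
  qed
  have "\<bar>nu (cat_delta g \<gamma> lam (- (g * \<gamma>) / 2) s) / cat_delta g \<gamma> lam (- (g * \<gamma>) / 2) s * lam
          - ((nu1 - nu1 * w / 2) + 2 * w * (nu1 - c * N1) * (s * (1 - s)))\<bar>
        \<le> (4 * nu1 + 3 * (c * N1)) * w^2 + 2 * \<kappa> * N1 * w" if "s \<in> {0..1}" for s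
  proof -
    have "0 < sqrt (1 - v s)" using v[OF that] w(2) by simp
    then have integrand: "nu (cat_delta g \<gamma> lam (- (g * \<gamma>) / 2) s) / cat_delta g \<gamma> lam (- (g * \<gamma>) / 2) s * lam
        = sqrt (1 - w) * (1 / sqrt (1 - v s)) * nu (N1 * sqrt (1 - v s))"
      unfolding delta using assms(1) by (simp add: lam field_simps)
    have parabola: "(nu1 - nu1 * w / 2) + 2 * w * (nu1 - c * N1) * (s * (1 - s))
        = nu1 - nu1 * w / 2 + (nu1 - c * N1) * v s / 2"
      unfolding v_def by simp
    show ?thesis
      unfolding integrand parabola by (rule catenary_integrand_approx[OF v[OF that] w(2) assms(1-3) w(3) der bounds])
  qed
  then have "\<bar>catenary_span nu g \<gamma> lam - ((nu1 - nu1 * w / 2) + 2 * w * (nu1 - c * N1) / 6)\<bar>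
      \<le> (4 * nu1 + 3 * (c * N1)) * w^2 + 2 * \<kappa> * N1 * w"
    unfolding catenary_span_def
    by (intro integral_approx_parabola integrable_catenary_integrand lam_pos cont)
  moreover have "(nu1 - nu1 * w / 2) + 2 * w * (nu1 - c * N1) / 6 = nu1 - w / 6 * (nu1 + 2 * (c * N1))"
    by (simp add: field_simps)
  ultimately show ?thesis
    unfolding lam_def by simp
qed

lemma catenary_span_critical_asymptotics:
  fixes nu :: "real \<Rightarrow> real"
  assumes nu: "stretch_limited N0 N1 nu0 nu1 nu" and "0 < \<epsilon>"
  obtains W where "0 < W" "W \<le> 1/2"
    "\<And>g \<gamma> w. 0 < g \<Longrightarrow> 0 < \<gamma> \<Longrightarrow> w = (g * \<gamma>)^2 / (4 * N1^2) \<Longrightarrow> w < W \<Longrightarrow>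
      \<bar>catenary_span nu g \<gamma> (sqrt (N1^2 - (g * \<gamma>)^2 / 4)) - (nu1 - w / 6 * (nu1 + 2 * (left_deriv nu N1 * N1)))\<bar>
        < \<epsilon> * (left_deriv nu N1 * N1) * w / 2"
proof -
  define c where "c = left_deriv nu N1"
  have N1: "0 < N1" and nu1: "0 < nu1" "nu N1 = nu1" and "\<And>y. nu y \<le> nu1"
    using nu unfolding stretch_limited_def by auto
  moreover have "\<And>y. 0 \<le> nu y"
    using stretch_limited_pos[OF nu] less_imp_le by blast
  ultimately have bounds: "\<And>y. 0 \<le> nu y" "\<And>y. nu y \<le> nu1" by auto
  have c: "0 < c" "(nu has_real_derivative c) (at N1 within {..N1})"
    unfolding c_def using stretch_limited_left_derivative[OF nu] by auto
  define B K \<kappa> where "B = c * N1" and "K = 4 * nu1 + 3 * B" and "\<kappa> = \<epsilon> * B / (8 * N1)"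
  have pos: "0 < B" "0 < K" "0 < \<kappa>"
    unfolding B_def K_def \<kappa>_def using c(1) N1 nu1(1) assms(2) by (simp_all add: add_pos_pos)
  obtain \<rho> where \<rho>: "0 < \<rho>"
    "\<And>y. N1 - \<rho> < y \<Longrightarrow> y \<le> N1 \<Longrightarrow> \<bar>nu y - nu1 + c * (N1 - y)\<bar> \<le> \<kappa> * (N1 - y)"
    using left_derivative_linear_approx[OF c(2) pos(3)] nu1(2) by metis
  define W where "W = min (1/2) (min (\<rho> / (2 * N1)) (\<epsilon> * B / (8 * K)))"
  show thesis
  proof (rule that)
    show "0 < W" "W \<le> 1/2"
      unfolding W_def using \<rho> N1 pos assms(2) by auto
    fix g \<gamma> w assume "0 < g" "0 < \<gamma>" and w_def: "w = (g * \<gamma>)^2 / (4 * N1^2)" and "w < W"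
    then have "0 < w" "w \<le> 1/2" "w < \<rho> / (2 * N1)" "w < \<epsilon> * B / (8 * K)"
      unfolding W_def using N1 by auto
    moreover have "N1 * (\<rho> / (2 * N1)) = \<rho> / 2"
      using N1 by simp
    ultimately have w: "0 < w" "w \<le> 1/2" "N1 * w < \<rho>" "w < \<epsilon> * B / (8 * K)"
      using mult_strict_left_mono[of w "\<rho> / (2 * N1)" N1] N1 \<rho>(1) by auto
    have "K * w^2 < \<epsilon> * B * w / 8"
      using mult_strict_left_mono[OF w(4), of "K * w"] pos w by (simp add: power2_eq_square)
    moreover have "2 * \<kappa> * N1 * w = \<epsilon> * B * w / 4"
      unfolding \<kappa>_def using N1 by simp
    moreover have "0 < \<epsilon> * B * w"
      using assms(2) pos w by simp
    moreover have "\<bar>catenary_span nu g \<gamma> (sqrt (N1^2 - (g * \<gamma>)^2 / 4)) - (nu1 - w / 6 * (nu1 + 2 * B))\<bar>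
        \<le> K * w^2 + 2 * \<kappa> * N1 * w"
      unfolding K_def B_def using catenary_span_critical_approx[OF N1 c(1) less_imp_le[OF pos(3)] \<rho>(2) bounds
        stretch_limited_continuous[OF nu] w_def w(2,3)] .
    ultimately show "\<bar>catenary_span nu g \<gamma> (sqrt (N1^2 - (g * \<gamma>)^2 / 4))
        - (nu1 - w / 6 * (nu1 + 2 * (left_deriv nu N1 * N1)))\<bar> < \<epsilon> * (left_deriv nu N1 * N1) * w / 2"
      unfolding B_def c_def by linarith
  qed
qed

lemma catenary_span_critical_bounds:
  fixes nu :: "real \<Rightarrow> real"
  assumes "0 < g" "stretch_limited N0 N1 nu0 nu1 nu" "0 < \<epsilon>"
  obtains \<gamma>0 where "0 < \<gamma>0"
    "\<And>\<gamma>. 0 < \<gamma> \<Longrightarrow> \<gamma> < \<gamma>0 \<Longrightarrow> (g * \<gamma>)^2 < 4 * N1^2 \<and>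
      catenary_span nu g \<gamma> (sqrt (N1^2 - (g * \<gamma>)^2 / 4))
        < nu1 - (g * \<gamma>)\<^sup>2 / (24 * N1\<^sup>2) * (nu1 + (2 - 3 * \<epsilon>) * left_deriv nu N1 * N1) \<and>
      nu1 - (g * \<gamma>)\<^sup>2 / (24 * N1\<^sup>2) * (nu1 + (2 + 3 * \<epsilon>) * left_deriv nu N1 * N1)
        < catenary_span nu g \<gamma> (sqrt (N1^2 - (g * \<gamma>)^2 / 4))"
proof -
  obtain W where W: "0 < W" "W \<le> 1/2" and asymptotics:
    "\<And>\<gamma> w. 0 < \<gamma> \<Longrightarrow> w = (g * \<gamma>)^2 / (4 * N1^2) \<Longrightarrow> w < W \<Longrightarrow>
      \<bar>catenary_span nu g \<gamma> (sqrt (N1^2 - (g * \<gamma>)^2 / 4)) - (nu1 - w / 6 * (nu1 + 2 * (left_deriv nu N1 * N1)))\<bar>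
        < \<epsilon> * (left_deriv nu N1 * N1) * w / 2"
    using catenary_span_critical_asymptotics[OF assms(2,3)] assms(1) by metis
  have N1: "0 < N1"
    using assms(2) unfolding stretch_limited_def by auto
  show thesis
  proof (rule that)
    show "0 < 2 * N1 * sqrt W / g"
      using N1 W assms(1) by simp
    fix \<gamma> assume \<gamma>: "0 < \<gamma>" "\<gamma> < 2 * N1 * sqrt W / g"
    define w where "w = (g * \<gamma>)^2 / (4 * N1^2)"
    have "g * \<gamma> < 2 * N1 * sqrt W"
      using \<gamma> assms(1) by (simp add: field_simps)
    then have "(g * \<gamma>)^2 < (2 * N1 * sqrt W)^2"
      using \<gamma> assms(1) by (intro power_strict_mono) auto
    then have "w < W"
      unfolding w_def using N1 W by (simp add: field_simps power_mult_distrib)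
    then have "(g * \<gamma>)^2 < W * (4 * N1^2)"
      using N1 unfolding w_def by (simp add: field_simps)
    moreover have "W * (4 * N1^2) \<le> 2 * N1^2"
      using mult_right_mono[OF W(2), of "4 * N1^2"] by simp
    ultimately have "(g * \<gamma>)^2 < 2 * N1^2"
      by linarith
    then have "(g * \<gamma>)^2 < 4 * N1^2"
      using zero_less_power[OF N1, of 2] by linarith
    moreover have "(g * \<gamma>)\<^sup>2 / (24 * N1\<^sup>2) * (nu1 + (2 - 3 * \<epsilon>) * left_deriv nu N1 * N1)
        = w / 6 * (nu1 + 2 * (left_deriv nu N1 * N1)) - \<epsilon> * (left_deriv nu N1 * N1) * w / 2"
      "(g * \<gamma>)\<^sup>2 / (24 * N1\<^sup>2) * (nu1 + (2 + 3 * \<epsilon>) * left_deriv nu N1 * N1)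
        = w / 6 * (nu1 + 2 * (left_deriv nu N1 * N1)) + \<epsilon> * (left_deriv nu N1 * N1) * w / 2"
      unfolding w_def using N1 by (simp_all add: field_simps)
    ultimately show "(g * \<gamma>)^2 < 4 * N1^2 \<and>
      catenary_span nu g \<gamma> (sqrt (N1^2 - (g * \<gamma>)^2 / 4))
        < nu1 - (g * \<gamma>)\<^sup>2 / (24 * N1\<^sup>2) * (nu1 + (2 - 3 * \<epsilon>) * left_deriv nu N1 * N1) \<and>
      nu1 - (g * \<gamma>)\<^sup>2 / (24 * N1\<^sup>2) * (nu1 + (2 + 3 * \<epsilon>) * left_deriv nu N1 * N1)
        < catenary_span nu g \<gamma> (sqrt (N1^2 - (g * \<gamma>)^2 / 4))"
      using asymptotics[OF \<gamma>(1) w_def \<open>w < W\<close>] unfolding abs_less_iff by linarith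
  qed
qed

lemma catenary_regime_iff:
  fixes lam N1 h :: real
  assumes "0 < lam" "0 < N1" "h \<noteq> 0" "h^2 < 4 * N1^2"
  shows "(0 < (N1^2 - lam^2) / h^2 \<and> (N1^2 - lam^2) / h^2 < 1/4) \<longleftrightarrow>
    sqrt (N1^2 - h^2 / 4) < lam \<and> lam < N1"
proof -
  have square_less: "x^2 < y^2 \<longleftrightarrow> x < y" if "0 \<le> x" "0 \<le> y" for x y :: real
    using power_mono_iff[of y x 2] that by (simp add: not_le[symmetric])
  have "0 < h^2" using assms(3) by simp
  then have "(0 < (N1^2 - lam^2) / h^2 \<and> (N1^2 - lam^2) / h^2 < 1/4) \<longleftrightarrow>
      N1^2 - h^2 / 4 < lam^2 \<and> lam^2 < N1^2"
    by (auto simp: zero_less_divide_iff divide_less_eq)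
  also have "\<dots> \<longleftrightarrow> sqrt (N1^2 - h^2 / 4) < lam \<and> lam < N1"
    using real_sqrt_less_iff[of "N1^2 - h^2 / 4" "lam^2"] assms(1,2) by (simp add: square_less)
  finally show ?thesis .
qed

lemma catenary_solution_regime_iff_span:
  fixes nu :: "real \<Rightarrow> real"
  assumes nu: "stretch_limited N0 N1 nu0 nu1 nu" and "0 < g" "0 < \<gamma>" "0 < lam"
    and solution: "catenary_solution nu g \<gamma> a lam mu"
    and "(g * \<gamma>)^2 < 4 * N1^2"
    and critical: "catenary_span nu g \<gamma> (sqrt (N1^2 - (g * \<gamma>)^2 / 4)) < A"
      "B < catenary_span nu g \<gamma> (sqrt (N1^2 - (g * \<gamma>)^2 / 4))"
  shows "(A \<le> a \<and> a < nu1 * (2 * N1 / (g * \<gamma>)) * arsinh (g * \<gamma> / (2 * N1))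
      \<longrightarrow> 0 < (N1\<^sup>2 - lam\<^sup>2) / (g * \<gamma>)\<^sup>2 \<and> (N1\<^sup>2 - lam\<^sup>2) / (g * \<gamma>)\<^sup>2 < 1/4) \<and>
    (0 < (N1\<^sup>2 - lam\<^sup>2) / (g * \<gamma>)\<^sup>2 \<and> (N1\<^sup>2 - lam\<^sup>2) / (g * \<gamma>)\<^sup>2 < 1/4
      \<longrightarrow> B \<le> a \<and> a < nu1 * (2 * N1 / (g * \<gamma>)) * arsinh (g * \<gamma> / (2 * N1)))"
proof -
  define lam_c where "lam_c = sqrt (N1^2 - (g * \<gamma>)^2 / 4)"
  define span where "span = catenary_span nu g \<gamma>"
  have N1: "0 < N1" "0 < nu1" "\<And>x. N1 \<le> x \<Longrightarrow> nu x = nu1" "\<And>x. nu x \<le> nu1"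
    using nu unfolding stretch_limited_def by auto
  have a: "a = span lam"
    unfolding span_def using catenary_solution_imp_span[OF nu assms(2-4) solution] .
  have "0 < lam_c"
    unfolding lam_c_def using assms(6) by simp
  have regime: "(0 < (N1\<^sup>2 - lam\<^sup>2) / (g * \<gamma>)\<^sup>2 \<and> (N1\<^sup>2 - lam\<^sup>2) / (g * \<gamma>)\<^sup>2 < 1/4)
      \<longleftrightarrow> lam_c < lam \<and> lam < N1"
    unfolding lam_c_def using assms(2,3,4,6) N1(1) by (intro catenary_regime_iff) simp_all
  have span_le: "span l1 \<le> span l2" if "0 < l1" "l1 \<le> l2" for l1 l2
    unfolding span_def using catenary_span_mono[OF that stretch_limited_mono[OF nu]
      less_imp_le[OF stretch_limited_pos[OF nu]] stretch_limited_continuous[OF nu]] .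
  have span_less: "span lam < span N1" if "lam < N1"
    unfolding span_def
    using catenary_span_less_inextensible[OF \<open>0 < lam\<close> that assms(2,3) stretch_limited_continuous[OF nu]] N1
    by blast
  have inextensible: "span N1 = nu1 * (2 * N1 / (g * \<gamma>)) * arsinh (g * \<gamma> / (2 * N1))"
    unfolding span_def using N1 assms(2,3) by (intro catenary_span_inextensible)
  have "lam_c < lam \<and> lam < N1" if "A \<le> a" "a < span N1"
  proof -
    have "\<not> N1 \<le> lam"
      using span_le[of N1 lam] N1(1) that unfolding a by linarith
    moreover have "\<not> lam \<le> lam_c"
      using span_le[of lam lam_c] \<open>0 < lam\<close> critical(1) that unfolding a span_def lam_c_def by linarith
    ultimately show ?thesis by simp
  qed
  moreover have "B \<le> a \<and> a < span N1" if "lam_c < lam" "lam < N1"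
    using span_le[of lam_c lam] \<open>0 < lam_c\<close> span_less critical(2) that unfolding a span_def lam_c_def by simp
  ultimately show ?thesis
    unfolding regime inextensible[symmetric] by blast
qed

theorem proposition4p3:
  fixes g \<epsilon> N0 N1 nu0 nu1 :: real and nu :: "real \<Rightarrow> real"
  assumes "0 < g"
    and "stretch_limited N0 N1 nu0 nu1 nu"
    and "0 < \<epsilon>" and "\<epsilon> < 1"
  shows "\<exists>\<gamma>0>0. \<forall>\<gamma> a lam mu. 0 < \<gamma> \<and> \<gamma> < \<gamma>0 \<and> 0 < a \<and> a < nu1 \<and> 0 < lam \<and>
           catenary_solution nu g \<gamma> a lam mu \<longrightarrow>
      ((nu1 - (g * \<gamma>)\<^sup>2 / (24 * N1\<^sup>2) * (nu1 + (2 - 3 * \<epsilon>) * left_deriv nu N1 * N1) \<le> a \<and>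
        a < nu1 * (2 * N1 / (g * \<gamma>)) * arsinh (g * \<gamma> / (2 * N1)))
       \<longrightarrow> (0 < (N1\<^sup>2 - lam\<^sup>2) / (g * \<gamma>)\<^sup>2 \<and> (N1\<^sup>2 - lam\<^sup>2) / (g * \<gamma>)\<^sup>2 < 1/4)) \<and>
      ((0 < (N1\<^sup>2 - lam\<^sup>2) / (g * \<gamma>)\<^sup>2 \<and> (N1\<^sup>2 - lam\<^sup>2) / (g * \<gamma>)\<^sup>2 < 1/4)
       \<longrightarrow> (nu1 - (g * \<gamma>)\<^sup>2 / (24 * N1\<^sup>2) * (nu1 + (2 + 3 * \<epsilon>) * left_deriv nu N1 * N1) \<le> a \<and>
            a < nu1 * (2 * N1 / (g * \<gamma>)) * arsinh (g * \<gamma> / (2 * N1))))"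
proof -
  obtain \<gamma>0 where "0 < \<gamma>0" and critical: "\<And>\<gamma>. 0 < \<gamma> \<Longrightarrow> \<gamma> < \<gamma>0 \<Longrightarrow> (g * \<gamma>)^2 < 4 * N1^2 \<and>
      catenary_span nu g \<gamma> (sqrt (N1^2 - (g * \<gamma>)^2 / 4))
        < nu1 - (g * \<gamma>)\<^sup>2 / (24 * N1\<^sup>2) * (nu1 + (2 - 3 * \<epsilon>) * left_deriv nu N1 * N1) \<and>
      nu1 - (g * \<gamma>)\<^sup>2 / (24 * N1\<^sup>2) * (nu1 + (2 + 3 * \<epsilon>) * left_deriv nu N1 * N1)
        < catenary_span nu g \<gamma> (sqrt (N1^2 - (g * \<gamma>)^2 / 4))"
    using catenary_span_critical_bounds[OF assms(1-3)] by blast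
  show ?thesis
    by (intro exI[of _ \<gamma>0] conjI[OF \<open>0 < \<gamma>0\<close>] allI impI, elim conjE,
        rule catenary_solution_regime_iff_span[OF assms(2,1)]) (use critical in blast)+
qed

end
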